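(* Let $t \in [n]$. The set of prime ideals of $R$ minimal over $\mathcal{I}^{\langle t\rangle}$ equals the set of ideals of the form $P^{\langle t\rangle}_S$ as $S$ varies over the maximal $t$-switchable subsets of $N$.
   Context: Fix positive integers $n, r_1,\dots,r_n$, let $N=[r_1]\times\cdots\times[r_n]$ (where $[r]=\{1,\dots,r\}$), and let $R$ be the polynomial ring over a field in the variables $x_a$, $a\in N$. For $L\subseteq[n]$ and $a,b\in N$, the switch ${\rm s}(L,a,b)\in N$ has $i$-th component $b_i$ if $i\in L$ and $a_i$ otherwise; write ${\rm s}(i,a,b)={\rm s}(\{i\},a,b)$. Let $d(a,b)=\#\{i: a_i\neq b_i\}$. Set $f_{i,a,b}=x_ax_b-x_{{\rm s}(i,a,b)}x_{{\rm s}(i,b,a)}$. For $t\in[n]$, $\mathcal{I}^{\langle t\rangle}=(f_{i,a,b}: a,b\in N,\ d(a,b)=2,\ i\in[t])$. A subset $S\subseteq N$ is $t$-switchable if for all $a,b\in S$ with $d(a,b)=2$ and all $i\in[t]$, ${\rm s}(i,a,b)\in S$. Elements $a,b\in S$ are connected in $S$ if there are $a_0=a,a_1,\dots,a_k=b$ in $S$ with $d(a_{j-1},a_j)\le 1$ for all $j$. For a $t$-switchable $S$, set $\tilde{\mathcal{I}}^{\langle t\rangle}_S=(f_{i,a,b}: i\in[t],\ a,b \text{ connected in } S)$, $\mathrm{Var}^{\langle t\rangle}_S=(x_a: a\notin S)$, and $P^{\langle t\rangle}_S=\mathrm{Var}^{\langle t\rangle}_S+\tilde{\mathcal{I}}^{\langle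 t\rangle}_S$. A $t$-switchable $S$ is maximal $t$-switchable if for every $t$-switchable $T\subseteq N$ properly containing $S$, the ideals $P^{\langle t\rangle}_S$ and $P^{\langle t\rangle}_T$ are incomparable under inclusion. *)

theory Defs
  imports "HOL-Library.Poly_Mapping"
begin

text \<open>Polynomials over a field 'k in variables indexed by nat \<Rightarrow> nat (tuples).
  The ring R is the subring of polynomials only involving variables x_a with a in N.\<close>

type_synonym 'k mpoly = "((nat \<Rightarrow> nat) \<Rightarrow>\<^sub>0 nat) \<Rightarrow>\<^sub>0 'k"

definition Nset :: "nat \<Rightarrow> (nat \<Rightarrow> nat) \<Rightarrow> (nat \<Rightarrow> nat) set" where
  "Nset n r = {a. \<forall>i. (i \<in> {1..n} \<longrightarrow> a i \<in> {1..r i}) \<and> (i \<notin> {1..n} \<longrightarrow> a i = 0)}"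

definition Rcar :: "(nat \<Rightarrow> nat) set \<Rightarrow> 'k::field mpoly set" where
  "Rcar N = {p :: 'k mpoly. \<forall>m \<in> Poly_Mapping.keys p. Poly_Mapping.keys m \<subseteq> N}"

definition Xv :: "(nat \<Rightarrow> nat) \<Rightarrow> 'k::field mpoly" where
  "Xv a = Poly_Mapping.single (Poly_Mapping.single a 1) 1"

definition switch :: "nat set \<Rightarrow> (nat \<Rightarrow> nat) \<Rightarrow> (nat \<Rightarrow> nat) \<Rightarrow> (nat \<Rightarrow> nat)" where
  "switch L a b = (\<lambda>i. if i \<in> L then b i else a i)"

definition dst :: "nat \<Rightarrow> (nat \<Rightarrow> nat) \<Rightarrow> (nat \<Rightarrow> nat) \<Rightarrow> nat" where
  "dst n a b = card {i \<in> {1..n}. a i \<noteq> b i}"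

definition fpol :: "nat \<Rightarrow> (nat \<Rightarrow> nat) \<Rightarrow> (nat \<Rightarrow> nat) \<Rightarrow> 'k::field mpoly" where
  "fpol i a b = Xv a * Xv b - Xv (switch {i} a b) * Xv (switch {i} b a)"

definition gen_ideal :: "'a::comm_ring_1 set \<Rightarrow> 'a set \<Rightarrow> 'a set" where
  "gen_ideal A G = {\<Sum>g\<in>F. c g * g | F c. finite F \<and> F \<subseteq> G \<and> (\<forall>g\<in>F. c g \<in> A)}"

definition is_ideal :: "'a::comm_ring_1 set \<Rightarrow> 'a set \<Rightarrow> bool" where
  "is_ideal A I \<longleftrightarrow> I \<subseteq> A \<and> 0 \<in> I \<and> (\<forall>x\<in>I. \<forall>y\<in>I. x + y \<in> I)
     \<and> (\<forall>a\<in>A. \<forall>x\<in>I. a * x \<in> I)"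

definition prime_ideal :: "'a::comm_ring_1 set \<Rightarrow> 'a set \<Rightarrow> bool" where
  "prime_ideal A P \<longleftrightarrow> is_ideal A P \<and> P \<noteq> A \<and>
     (\<forall>a\<in>A. \<forall>b\<in>A. a * b \<in> P \<longrightarrow> a \<in> P \<or> b \<in> P)"

definition minimal_prime_over :: "'a::comm_ring_1 set \<Rightarrow> 'a set \<Rightarrow> 'a set \<Rightarrow> bool" where
  "minimal_prime_over A J P \<longleftrightarrow> prime_ideal A P \<and> J \<subseteq> P \<and>
     (\<forall>Q. prime_ideal A Q \<and> J \<subseteq> Q \<and> Q \<subseteq> P \<longrightarrow> Q = P)"

definition I_t :: "nat \<Rightarrow> (nat \<Rightarrow> nat) \<Rightarrow> nat \<Rightarrow> 'k::field mpoly set" where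
  "I_t n r t = gen_ideal (Rcar (Nset n r))
     {fpol i a b | i a b. a \<in> Nset n r \<and> b \<in> Nset n r \<and> dst n a b = 2 \<and> i \<in> {1..t}}"

definition switchable :: "nat \<Rightarrow> (nat \<Rightarrow> nat) \<Rightarrow> nat \<Rightarrow> (nat \<Rightarrow> nat) set \<Rightarrow> bool" where
  "switchable n r t S \<longleftrightarrow> S \<subseteq> Nset n r \<and>
     (\<forall>a\<in>S. \<forall>b\<in>S. dst n a b = 2 \<longrightarrow> (\<forall>i\<in>{1..t}. switch {i} a b \<in> S))"

definition connected_in :: "nat \<Rightarrow> (nat \<Rightarrow> nat) set \<Rightarrow> (nat \<Rightarrow> nat) \<Rightarrow> (nat \<Rightarrow> nat) \<Rightarrow> bool" where
  "connected_in n S a b \<longleftrightarrow> a \<in> S \<and> b \<in> S \<and>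
     (\<lambda>x y. x \<in> S \<and> y \<in> S \<and> dst n x y \<le> 1)\<^sup>*\<^sup>* a b"

definition P_S :: "nat \<Rightarrow> (nat \<Rightarrow> nat) \<Rightarrow> nat \<Rightarrow> (nat \<Rightarrow> nat) set \<Rightarrow> 'k::field mpoly set" where
  "P_S n r t S = gen_ideal (Rcar (Nset n r))
     ({Xv a | a. a \<in> Nset n r \<and> a \<notin> S} \<union>
      {fpol i a b | i a b. i \<in> {1..t} \<and> connected_in n S a b})"

definition maximal_switchable :: "'k::field itself \<Rightarrow> nat \<Rightarrow> (nat \<Rightarrow> nat) \<Rightarrow> nat \<Rightarrow> (nat \<Rightarrow> nat) set \<Rightarrow> bool" where
  "maximal_switchable _ n r t S \<longleftrightarrow> switchable n r t S \<and>
     (\<forall>T. switchable n r t T \<and> S \<subset> T \<longrightarrow>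
        \<not> ((P_S n r t S :: 'k mpoly set) \<subseteq> P_S n r t T) \<and> \<not> ((P_S n r t T :: 'k mpoly set) \<subseteq> P_S n r t S))"

end

theory Submission
  imports Defs "HOL-Library.List_Lexorder" "HOL-Library.Product_Lexorder"
begin

text \<open>For a prime \<open>P \<supseteq> I_t\<close>, the points \<open>a\<close> with \<open>x\<^sub>a \<notin> P\<close> form a \<open>t\<close>-switchable set \<open>S\<close>,
  and an induction along paths in \<open>S\<close> shows \<open>P\<^sub>S \<subseteq> P\<close>. Conversely, for \<open>t\<close>-switchable \<open>S\<close>
  the ideal \<open>P\<^sub>S\<close> is the kernel of the monomial map sending \<open>x\<^sub>a\<close> to
  \<open>w(C, a\<^bsub>t+1\<^esub> \<dots> a\<^sub>n) \<cdot> y(C, 1, a\<^sub>1) \<cdots> y(C, t, a\<^sub>t)\<close> for \<open>a\<close> in the component \<open>C\<close> of \<open>S\<close>,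
  and to \<open>0\<close> for \<open>a \<notin> S\<close>: the kernel is prime, and any two monomials with the same image are
  joined by a chain of single-coordinate switches, each a multiple of a generator of \<open>P\<^sub>S\<close>.
  Since \<open>x\<^sub>a \<in> P\<^sub>S\<close> exactly when \<open>a \<notin> S\<close>, inclusions between the \<open>P\<^sub>S\<close> reverse inclusions
  between the sets \<open>S\<close>, and minimality of the prime matches maximality of the switchable set.\<close>

lemma poly_mapping_sum_single_lookup:
  "(p :: 'a \<Rightarrow>\<^sub>0 'b::comm_monoid_add) = (\<Sum>m\<in>Poly_Mapping.keys p. Poly_Mapping.single m (Poly_Mapping.lookup p m))"
  by (rule poly_mapping_eqI)
    (simp add: lookup_sum lookup_single when_def sum.delta in_keys_iff del: lookup_not_eq_zero_eq_in_keys)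

lemma keys_uminus: "Poly_Mapping.keys (- (p :: 'a \<Rightarrow>\<^sub>0 'b::ab_group_add)) = Poly_Mapping.keys p"
  by (rule set_eqI) (simp only: in_keys_iff lookup_uminus neg_equal_0_iff_equal)

lemma keys_add_nat:
  "Poly_Mapping.keys ((m :: 'a \<Rightarrow>\<^sub>0 nat) + m') = Poly_Mapping.keys m \<union> Poly_Mapping.keys m'"
  by (rule set_eqI) (simp only: in_keys_iff lookup_add Un_iff add_eq_0_iff_both_eq_0 de_Morgan_conj)

lemma keys_diff_single_subset:
  "Poly_Mapping.keys ((m :: 'a \<Rightarrow>\<^sub>0 nat) - Poly_Mapping.single b 1) \<subseteq> Poly_Mapping.keys m"
  by (auto simp: in_keys_iff lookup_minus)

lemma in_keys_diff_single:
  "c \<in> Poly_Mapping.keys (m :: 'a \<Rightarrow>\<^sub>0 nat) \<Longrightarrow> c \<noteq> b \<Longrightarrow> c \<in> Poly_Mapping.keys (m - Poly_Mapping.single b 1)"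
  by (simp add: in_keys_iff lookup_minus lookup_single)

lemma single_add_diff_single:
  assumes "b \<in> Poly_Mapping.keys (m :: 'a \<Rightarrow>\<^sub>0 nat)"
  shows "m = Poly_Mapping.single b 1 + (m - Poly_Mapping.single b 1)"
proof (rule poly_mapping_eqI)
  fix k
  have "Poly_Mapping.lookup m b \<ge> 1" using assms by (simp add: in_keys_iff)
  then show "Poly_Mapping.lookup m k = Poly_Mapping.lookup (Poly_Mapping.single b 1 + (m - Poly_Mapping.single b 1)) k"
    by (cases "k = b") (simp_all add: lookup_add lookup_minus lookup_single)
qed

lemma single_one_neq_zero [simp]: "Poly_Mapping.single x (1::'b::zero_neq_one) \<noteq> 0"
  by (metis lookup_single_eq lookup_zero one_neq_zero)

lemma single_one_eq_iff:
  "Poly_Mapping.single x (1::'b::zero_neq_one) = Poly_Mapping.single y 1 \<longleftrightarrow> x = y"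
  by (metis lookup_single_eq lookup_single_not_eq zero_neq_one)

lemma single_sum: "Poly_Mapping.single k (sum f F) = (\<Sum>x\<in>F. Poly_Mapping.single k (f x))"
  by (induction F rule: infinite_finite_induct) (simp_all add: single_add)

lemma sum_keys_superset:
  assumes "finite U" "Poly_Mapping.keys m \<subseteq> U" "\<And>x. f x 0 = 0"
  shows "(\<Sum>a\<in>Poly_Mapping.keys m. f a (Poly_Mapping.lookup m a)) = (\<Sum>a\<in>U. f a (Poly_Mapping.lookup m a))"
  by (rule sum.mono_neutral_left[OF assms(1,2)]) (simp add: assms(3) in_keys_iff)

definition total_degree :: "('a \<Rightarrow>\<^sub>0 nat) \<Rightarrow> nat" where
  "total_degree m = (\<Sum>a\<in>Poly_Mapping.keys m. Poly_Mapping.lookup m a)"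

lemma total_degree_add: "total_degree ((m :: 'a \<Rightarrow>\<^sub>0 nat) + m') = total_degree m + total_degree m'"
proof -
  let ?U = "Poly_Mapping.keys m \<union> Poly_Mapping.keys m'"
  have "total_degree p = (\<Sum>a\<in>?U. Poly_Mapping.lookup p a)" if "Poly_Mapping.keys p \<subseteq> ?U" for p
    unfolding total_degree_def by (rule sum_keys_superset[where f = "\<lambda>a x. x"]) (use that in auto)
  then show ?thesis by (simp add: keys_add_nat lookup_add sum.distrib)
qed

lemma total_degree_single: "total_degree (Poly_Mapping.single a (1::nat)) = 1"
  by (simp add: total_degree_def)

definition is_subring :: "'a::comm_ring_1 set \<Rightarrow> bool" where
  "is_subring A \<longleftrightarrow> 0 \<in> A \<and> 1 \<in> A \<and> (\<forall>x\<in>A. - x \<in> A) \<and> (\<forall>x\<in>A. \<forall>y\<in>A. x + y \<in> A \<and> x * y \<in> A)"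

lemma subring_zero: "is_subring A \<Longrightarrow> 0 \<in> A"
  and subring_one: "is_subring A \<Longrightarrow> 1 \<in> A"
  and subring_uminus: "is_subring A \<Longrightarrow> x \<in> A \<Longrightarrow> - x \<in> A"
  and subring_add: "is_subring A \<Longrightarrow> x \<in> A \<Longrightarrow> y \<in> A \<Longrightarrow> x + y \<in> A"
  and subring_mult: "is_subring A \<Longrightarrow> x \<in> A \<Longrightarrow> y \<in> A \<Longrightarrow> x * y \<in> A"
  by (simp_all add: is_subring_def)

lemma subring_diff: "is_subring A \<Longrightarrow> x \<in> A \<Longrightarrow> y \<in> A \<Longrightarrow> x - y \<in> A"
  unfolding diff_conv_add_uminus by (intro subring_add subring_uminus)

lemma subring_sum: "is_subring A \<Longrightarrow> (\<And>x. x \<in> F \<Longrightarrow> f x \<in> A) \<Longrightarrow> sum f F \<in> A"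
  by (induction F rule: infinite_finite_induct) (auto simp: is_subring_def)

lemma ideal_zero: "is_ideal A J \<Longrightarrow> 0 \<in> J"
  by (simp add: is_ideal_def)

lemma ideal_add: "is_ideal A J \<Longrightarrow> x \<in> J \<Longrightarrow> y \<in> J \<Longrightarrow> x + y \<in> J"
  by (simp add: is_ideal_def)

lemma ideal_mult: "is_ideal A J \<Longrightarrow> a \<in> A \<Longrightarrow> x \<in> J \<Longrightarrow> a * x \<in> J"
  by (simp add: is_ideal_def)

lemma ideal_diff:
  assumes "is_subring A" "is_ideal A J" "x \<in> J" "y \<in> J"
  shows "x - y \<in> J"
proof -
  have "- 1 \<in> A" using assms(1) by (simp add: subring_one subring_uminus)
  then have "(- 1) * y \<in> J" by (rule ideal_mult[OF assms(2) _ assms(4)])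
  from ideal_add[OF assms(2,3) this] show ?thesis by simp
qed

lemma ideal_sum: "is_ideal A J \<Longrightarrow> (\<And>x. x \<in> F \<Longrightarrow> f x \<in> J) \<Longrightarrow> sum f F \<in> J"
  by (induction F rule: infinite_finite_induct) (auto simp: is_ideal_def)

lemma prime_idealD:
  "prime_ideal A P \<Longrightarrow> x \<in> A \<Longrightarrow> y \<in> A \<Longrightarrow> x * y \<in> P \<Longrightarrow> x \<in> P \<or> y \<in> P"
  by (simp add: prime_ideal_def)

lemma prime_ideal_cancel:
  "prime_ideal A P \<Longrightarrow> c \<in> A \<Longrightarrow> c \<notin> P \<Longrightarrow> y \<in> A \<Longrightarrow> c * y \<in> P \<Longrightarrow> y \<in> P"
  using prime_idealD by blast

lemma gen_ideal_subset: "is_subring A \<Longrightarrow> G \<subseteq> A \<Longrightarrow> gen_ideal A G \<subseteq> A"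
  unfolding gen_ideal_def by (auto intro!: subring_sum subring_mult)

lemma gen_ideal_add:
  assumes A: "is_subring A" and x: "x \<in> gen_ideal A G" and y: "y \<in> gen_ideal A G"
  shows "x + y \<in> gen_ideal A G"
proof -
  obtain F1 c1 F2 c2 where x: "x = (\<Sum>g\<in>F1. c1 g * g)" "finite F1" "F1 \<subseteq> G" "\<forall>g\<in>F1. c1 g \<in> A"
    and y: "y = (\<Sum>g\<in>F2. c2 g * g)" "finite F2" "F2 \<subseteq> G" "\<forall>g\<in>F2. c2 g \<in> A"
    using x y unfolding gen_ideal_def by blast
  define c where "c g = (if g \<in> F1 then c1 g else 0) + (if g \<in> F2 then c2 g else 0)" for g
  have "x = (\<Sum>g\<in>F1 \<union> F2. (if g \<in> F1 then c1 g else 0) * g)"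
    unfolding x(1) using x(2) y(2) by (intro sum.mono_neutral_cong_left) auto
  moreover have "y = (\<Sum>g\<in>F1 \<union> F2. (if g \<in> F2 then c2 g else 0) * g)"
    unfolding y(1) using x(2) y(2) by (intro sum.mono_neutral_cong_left) auto
  ultimately have "x + y = (\<Sum>g\<in>F1 \<union> F2. c g * g)"
    by (simp add: c_def sum.distrib[symmetric] distrib_right)
  moreover have "\<forall>g\<in>F1 \<union> F2. c g \<in> A"
    using x y A by (auto simp: c_def intro: subring_add subring_zero)
  ultimately show ?thesis
    unfolding gen_ideal_def using x y by blast
qed

lemma gen_ideal_mult:
  assumes A: "is_subring A" and a: "a \<in> A" and x: "x \<in> gen_ideal A G"
  shows "a * x \<in> gen_ideal A G"
proof -
  obtain F c where x: "x = (\<Sum>g\<in>F. c g * g)" "finite F" "F \<subseteq> G" "\<forall>g\<in>F. c g \<in> A"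
    using x unfolding gen_ideal_def by blast
  have "a * x = (\<Sum>g\<in>F. (a * c g) * g)"
    using x by (simp add: sum_distrib_left mult.assoc)
  moreover have "\<forall>g\<in>F. a * c g \<in> A" using x a A by (blast intro: subring_mult)
  ultimately show ?thesis
    unfolding gen_ideal_def using x by (intro CollectI exI[of _ F] exI[of _ "\<lambda>g. a * c g"]) simp
qed

lemma gen_ideal_is_ideal: "is_subring A \<Longrightarrow> G \<subseteq> A \<Longrightarrow> is_ideal A (gen_ideal A G)"
  unfolding is_ideal_def
  by (auto intro: gen_ideal_add gen_ideal_mult dest: gen_ideal_subset)
    (auto simp: gen_ideal_def intro!: exI[of _ "{}"])

lemma gen_ideal_gen: "1 \<in> A \<Longrightarrow> g \<in> G \<Longrightarrow> g \<in> gen_ideal A G"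
  unfolding gen_ideal_def by (rule CollectI, rule exI[of _ "{g}"], rule exI[of _ "\<lambda>_. 1"]) simp

lemma gen_ideal_least:
  assumes "is_ideal A J" "G \<subseteq> J"
  shows "gen_ideal A G \<subseteq> J"
proof
  fix x assume "x \<in> gen_ideal A G"
  then obtain F c where "x = (\<Sum>g\<in>F. c g * g)" "F \<subseteq> G" "\<forall>g\<in>F. c g \<in> A"
    unfolding gen_ideal_def by blast
  then show "x \<in> J" using assms by (auto intro!: ideal_sum ideal_mult)
qed

lemma prime_ideal_kernel:
  fixes f :: "'a::comm_ring_1 \<Rightarrow> 'b::idom"
  assumes A: "is_subring A"
    and add: "\<And>x y. f (x + y) = f x + f y" and mult: "\<And>x y. f (x * y) = f x * f y"
    and one: "f 1 \<noteq> 0"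
  shows "prime_ideal A {p \<in> A. f p = 0}"
proof -
  have "f 0 = 0" using add[of 0 0] by (metis add_cancel_right_right add_0)
  then show ?thesis
    using A one by (auto simp: prime_ideal_def is_ideal_def is_subring_def add mult)
qed

lemma fibrewise_sum_in_ideal:
  fixes c g :: "'i \<Rightarrow> 'a::comm_ring_1"
  assumes J: "is_ideal A J" and K: "finite K" and c: "\<And>m. m \<in> K \<Longrightarrow> c m \<in> A"
    and fibre_sum: "\<And>e. (\<Sum>m\<in>{m \<in> K. E m = e}. c m) = 0"
    and fibre_diff: "\<And>m m'. m \<in> K \<Longrightarrow> m' \<in> K \<Longrightarrow> E m = E m' \<Longrightarrow> g m - g m' \<in> J"
  shows "(\<Sum>m\<in>K. c m * g m) \<in> J"
proof -
  define rep where "rep e = (SOME m. m \<in> K \<and> E m = e)" for e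
  have rep: "rep (E m) \<in> K \<and> E (rep (E m)) = E m" if "m \<in> K" for m
    unfolding rep_def by (rule someI) (use that in blast)
  have "(\<Sum>m\<in>K. c m * g (rep (E m))) = (\<Sum>e\<in>E ` K. \<Sum>m\<in>{m \<in> K. E m = e}. c m * g (rep (E m)))"
    by (rule sum.image_gen[OF K])
  also have "\<dots> = (\<Sum>e\<in>E ` K. (\<Sum>m\<in>{m \<in> K. E m = e}. c m) * g (rep e))"
    by (simp add: sum_distrib_right)
  also have "\<dots> = 0" by (simp add: fibre_sum)
  finally have "(\<Sum>m\<in>K. c m * g m) = (\<Sum>m\<in>K. c m * (g m - g (rep (E m))))"
    by (simp add: algebra_simps sum_subtractf)
  also have "\<dots> \<in> J"
    using rep by (intro ideal_sum[OF J] ideal_mult[OF J] c fibre_diff) auto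
  finally show ?thesis .
qed

lemma Rcar_add: "p \<in> Rcar N \<Longrightarrow> q \<in> Rcar N \<Longrightarrow> p + q \<in> Rcar N"
  using keys_add[of p q] by (auto simp: Rcar_def)

lemma Rcar_mult: "p \<in> Rcar N \<Longrightarrow> q \<in> Rcar N \<Longrightarrow> p * q \<in> Rcar N"
  unfolding Rcar_def mem_Collect_eq
proof (intro ballI subsetI)
  fix m x assume p: "\<forall>m\<in>Poly_Mapping.keys p. Poly_Mapping.keys m \<subseteq> N"
    and q: "\<forall>m\<in>Poly_Mapping.keys q. Poly_Mapping.keys m \<subseteq> N"
    and m: "m \<in> Poly_Mapping.keys (p * q)" and x: "x \<in> Poly_Mapping.keys m"
  obtain a b where ab: "m = a + b" "a \<in> Poly_Mapping.keys p" "b \<in> Poly_Mapping.keys q"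
    using keys_mult[of p q] m by blast
  have "x \<in> Poly_Mapping.keys a \<union> Poly_Mapping.keys b"
    using keys_add[of a b] x ab(1) by blast
  then show "x \<in> N" using p q ab by blast
qed

lemma Rcar_single: "Poly_Mapping.keys m \<subseteq> N \<Longrightarrow> Poly_Mapping.single m c \<in> Rcar N"
  by (simp add: Rcar_def)

lemma Rcar_Xv: "a \<in> N \<Longrightarrow> Xv a \<in> Rcar N"
  by (simp add: Rcar_def Xv_def)

lemma is_subring_Rcar: "is_subring (Rcar N)"
proof -
  have "0 \<in> Rcar N" "1 \<in> Rcar N" "\<And>x. x \<in> Rcar N \<Longrightarrow> - x \<in> Rcar N"
    by (simp_all add: Rcar_def keys_uminus)
  then show ?thesis unfolding is_subring_def using Rcar_add Rcar_mult by blast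
qed

definition monomial :: "((nat \<Rightarrow> nat) \<Rightarrow>\<^sub>0 nat) \<Rightarrow> 'k::field mpoly" where
  "monomial m = Poly_Mapping.single m 1"

lemma monomial_add: "monomial (m + m') = (monomial m * monomial m' :: 'k::field mpoly)"
  by (simp add: monomial_def mult_single)

lemma monomial_single: "monomial (Poly_Mapping.single a 1) = Xv a"
  by (simp add: monomial_def Xv_def)

lemma Rcar_monomial: "Poly_Mapping.keys m \<subseteq> N \<Longrightarrow> monomial m \<in> Rcar N"
  by (simp add: monomial_def Rcar_single)

lemma switch_singleton: "switch {i} a b = a(i := b i)"
  by (auto simp: switch_def)

lemma Nset_outside: "a \<in> Nset n r \<Longrightarrow> k \<notin> {1..n} \<Longrightarrow> a k = 0"
  unfolding Nset_def by blast

lemma Nset_switch: "a \<in> Nset n r \<Longrightarrow> b \<in> Nset n r \<Longrightarrow> switch L a b \<in> Nset n r"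
  by (auto simp: Nset_def switch_def)

lemma Nset_upd: "a \<in> Nset n r \<Longrightarrow> b \<in> Nset n r \<Longrightarrow> a(i := b i) \<in> Nset n r"
  using Nset_switch[of a n r b "{i}"] by (simp add: switch_singleton)

lemma Nset_eqI:
  assumes "a \<in> Nset n r" "b \<in> Nset n r" "\<And>k. k \<in> {1..n} \<Longrightarrow> a k = b k"
  shows "a = b"
proof
  fix k show "a k = b k"
  proof (cases "k \<in> {1..n}")
    case False
    then show ?thesis using Nset_outside[OF assms(1)] Nset_outside[OF assms(2)] by simp
  qed (rule assms(3))
qed

lemma Nset_encoding_inj:
  assumes "a \<in> Nset n r" "b \<in> Nset n r" "map a [0..<Suc n] = map b [0..<Suc n]"
  shows "a = b"
  by (rule Nset_eqI[OF assms(1,2)]) (use assms(3) in \<open>auto simp: map_eq_conv\<close>)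

lemma dst_sym: "dst n a b = dst n b a"
  unfolding dst_def by (metis (no_types, lifting))

lemma dst_le_card: "{k \<in> {1..n}. x k \<noteq> y k} \<subseteq> F \<Longrightarrow> finite F \<Longrightarrow> dst n x y \<le> card F"
  unfolding dst_def by (rule card_mono)

lemma dst_le_one_obtain:
  assumes "a \<in> Nset n r" "b \<in> Nset n r" "dst n a b \<le> 1"
  obtains l where "\<And>k. k \<noteq> l \<Longrightarrow> a k = b k"
proof -
  let ?D = "{i \<in> {1..n}. a i \<noteq> b i}"
  have "card ?D \<le> 1" using assms(3) by (simp add: dst_def)
  then have "\<forall>x\<in>?D. \<forall>y\<in>?D. x = y" using card_le_Suc0_iff_eq[of ?D] by simp
  then obtain l where D: "?D \<subseteq> {l}" by blast
  have "a k = b k" if "k \<noteq> l" for k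
  proof (cases "k \<in> {1..n}")
    case True
    then show ?thesis using D that by blast
  next
    case False
    then show ?thesis using Nset_outside[OF assms(1)] Nset_outside[OF assms(2)] by simp
  qed
  then show ?thesis using that by blast
qed

lemma dst_le_two:
  assumes "\<And>k. k \<noteq> i \<Longrightarrow> k \<noteq> l \<Longrightarrow> u k = v k"
  shows "dst n u v \<le> 2"
proof -
  have "dst n u v \<le> card {i, l}" by (rule dst_le_card) (use assms in auto)
  also have "\<dots> \<le> 2" by (simp add: card_insert_if)
  finally show ?thesis .
qed

lemma dst_upd_le_one: "dst n a (a(i := v)) \<le> 1"
proof -
  have "dst n a (a(i := v)) \<le> card {i}" by (rule dst_le_card) auto
  then show ?thesis by simp
qed

lemma dst_swap: "dst n (a(i := b i)) (b(i := a i)) = dst n a b"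
proof -
  have "{k \<in> {1..n}. (a(i := b i)) k \<noteq> (b(i := a i)) k} = {k \<in> {1..n}. a k \<noteq> b k}" by auto
  then show ?thesis by (simp add: dst_def)
qed

lemma dst_upd_other:
  assumes "dst n a b = 2" "a i \<noteq> b i" "a \<in> Nset n r" "b \<in> Nset n r"
  shows "dst n (a(i := b i)) b \<le> 1"
proof -
  let ?D = "{k \<in> {1..n}. a k \<noteq> b k}"
  have "i \<in> ?D" using assms(2) Nset_outside[OF assms(3)] Nset_outside[OF assms(4)] by fastforce
  have "dst n (a(i := b i)) b \<le> card (?D - {i})" by (rule dst_le_card) auto
  also have "\<dots> = 1" using \<open>i \<in> ?D\<close> assms(1) by (simp add: dst_def card_Diff_singleton)
  finally show ?thesis .
qed

definition adjacent_in :: "nat \<Rightarrow> (nat \<Rightarrow> nat) set \<Rightarrow> (nat \<Rightarrow> nat) \<Rightarrow> (nat \<Rightarrow> nat) \<Rightarrow> bool" where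
  "adjacent_in n S x y \<longleftrightarrow> x \<in> S \<and> y \<in> S \<and> dst n x y \<le> 1"

lemma connected_in_iff: "connected_in n S a b \<longleftrightarrow> a \<in> S \<and> b \<in> S \<and> (adjacent_in n S)\<^sup>*\<^sup>* a b"
proof -
  have "adjacent_in n S = (\<lambda>x y. x \<in> S \<and> y \<in> S \<and> dst n x y \<le> 1)"
    by (simp add: adjacent_in_def fun_eq_iff)
  then show ?thesis by (simp add: connected_in_def)
qed

lemma connected_in_refl: "a \<in> S \<Longrightarrow> connected_in n S a a"
  by (simp add: connected_in_iff)

lemma symp_adjacent_in: "symp (adjacent_in n S)"
  by (rule sympI) (auto simp: adjacent_in_def dst_sym)

lemma connected_in_sym: "connected_in n S a b \<Longrightarrow> connected_in n S b a"
  unfolding connected_in_iff using sympD[OF symp_rtranclp[OF symp_adjacent_in]] by blast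

lemma connected_in_trans: "connected_in n S a b \<Longrightarrow> connected_in n S b c \<Longrightarrow> connected_in n S a c"
  unfolding connected_in_iff by (meson rtranclp_trans)

lemma connected_in_adjacent: "a \<in> S \<Longrightarrow> b \<in> S \<Longrightarrow> dst n a b \<le> 1 \<Longrightarrow> connected_in n S a b"
  unfolding connected_in_iff by (auto simp: adjacent_in_def)

lemma fpol_upd: "fpol i a b = Xv a * Xv b - Xv (a(i := b i)) * Xv (b(i := a i))"
  by (simp add: fpol_def switch_singleton)

lemma fpol_sym: "fpol i a b = fpol i b a"
  by (simp add: fpol_def mult.commute)

lemma fpol_self: "fpol i a a = 0"
  by (simp add: fpol_upd)

lemma fpol_eq_zero_if_adjacent:
  assumes "a \<in> Nset n r" "b \<in> Nset n r" "dst n a b \<le> 1"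
  shows "fpol i a b = 0"
proof -
  obtain l where l: "\<And>k. k \<noteq> l \<Longrightarrow> a k = b k" using dst_le_one_obtain[OF assms] by blast
  show ?thesis
  proof (cases "i = l")
    case True
    then have "a(i := b i) = b" "b(i := a i) = a" using l by (auto simp: fun_eq_iff)
    then show ?thesis by (simp add: fpol_upd mult.commute)
  next
    case False
    then have "a(i := b i) = a" "b(i := a i) = b" using l by (auto simp: fun_eq_iff)
    then show ?thesis by (simp add: fpol_upd)
  qed
qed

lemma Rcar_fpol: "a \<in> Nset n r \<Longrightarrow> b \<in> Nset n r \<Longrightarrow> fpol i a b \<in> Rcar (Nset n r)"
  by (auto simp: fpol_def intro!: subring_diff Rcar_mult Rcar_Xv Nset_switch is_subring_Rcar)

lemma is_ideal_I_t: "is_ideal (Rcar (Nset n r)) (I_t n r t)"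
  unfolding I_t_def by (rule gen_ideal_is_ideal[OF is_subring_Rcar]) (auto intro: Rcar_fpol)

lemma fpol_in_I_t:
  assumes "u \<in> Nset n r" "v \<in> Nset n r" "i \<in> {1..t}" "\<And>k. k \<noteq> i \<Longrightarrow> k \<noteq> l \<Longrightarrow> u k = v k"
  shows "fpol i u v \<in> I_t n r t"
proof (cases "dst n u v = 2")
  case True
  then show ?thesis
    unfolding I_t_def by (intro gen_ideal_gen subring_one[OF is_subring_Rcar]) (use assms in blast)
next
  case False
  with dst_le_two[of i l u v n] assms(4) have "dst n u v \<le> 1" by fastforce
  then show ?thesis using fpol_eq_zero_if_adjacent assms ideal_zero[OF is_ideal_I_t] by metis
qed

section \<open>Prime ideals containing \<open>I_t\<close>\<close>

definition nonvanishing_points :: "nat \<Rightarrow> (nat \<Rightarrow> nat) \<Rightarrow> 'k::field mpoly set \<Rightarrow> (nat \<Rightarrow> nat) set" where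
  "nonvanishing_points n r P = {a \<in> Nset n r. Xv a \<notin> P}"

context
  fixes n :: nat and r :: "nat \<Rightarrow> nat" and P :: "'k::field mpoly set"
  assumes prime: "prime_ideal (Rcar (Nset n r)) P"
begin

lemma is_ideal_prime: "is_ideal (Rcar (Nset n r)) P"
  using prime by (simp add: prime_ideal_def)

lemma Xv_cancel: "c \<in> Nset n r \<Longrightarrow> Xv c \<notin> P \<Longrightarrow> y \<in> Rcar (Nset n r) \<Longrightarrow> Xv c * y \<in> P \<Longrightarrow> y \<in> P"
  using prime_ideal_cancel[OF prime Rcar_Xv] by blast

lemma fpol_in_prime_exchange:
  assumes a: "a \<in> Nset n r" and c: "c \<in> Nset n r"
    and a': "a(i := p) \<in> Nset n r" and b: "c(i := q) \<in> Nset n r"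
    and f_ac: "fpol i a c \<in> P" and f_a'c: "fpol i (a(i := p)) c \<in> P"
    and f_a'b: "fpol i (a(i := p)) (c(i := q)) \<in> P"
    and Xc: "Xv c \<notin> P" and Xa': "Xv (a(i := p)) \<notin> P"
  shows "fpol i a (c(i := q)) \<in> P"
proof -
  let ?R = "Rcar (Nset n r)"
  let ?Xa = "Xv a" and ?Xc = "Xv c" and ?Xa' = "Xv (a(i := p))" and ?Xb = "Xv (c(i := q))"
    and ?Xac = "Xv (a(i := c i))" and ?Xca = "Xv (c(i := a i))" and ?Xab = "Xv (a(i := q))"
  have "a(i := q) \<in> Nset n r" "c(i := p) \<in> Nset n r"
    using Nset_upd[OF a b, of i] Nset_upd[OF c a', of i] by simp_all
  then have R: "?Xa \<in> ?R" "?Xc \<in> ?R" "?Xac \<in> ?R" "?Xca \<in> ?R" "?Xa' \<in> ?R" "?Xb \<in> ?R" "?Xab \<in> ?R"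
    using a c a' b by (auto intro!: Rcar_Xv Nset_upd)
  have "?Xb * ?Xa' * fpol i a c + ?Xca * ?Xac * fpol i (a(i := p)) (c(i := q))
      - ?Xab * ?Xca * fpol i (a(i := p)) c \<in> P"
    using f_ac f_a'c f_a'b R
    by (intro ideal_diff[OF is_subring_Rcar is_ideal_prime] ideal_add[OF is_ideal_prime]
        ideal_mult[OF is_ideal_prime] Rcar_mult)
  also have "?Xb * ?Xa' * fpol i a c + ?Xca * ?Xac * fpol i (a(i := p)) (c(i := q))
      - ?Xab * ?Xca * fpol i (a(i := p)) c = ?Xc * (?Xa' * fpol i a (c(i := q)))"
    by (simp add: fpol_upd algebra_simps)
  finally have "?Xa' * fpol i a (c(i := q)) \<in> P"
    using Xv_cancel[OF c Xc] Rcar_mult[OF R(5) Rcar_fpol[OF a b]] by blast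
  then show ?thesis using Xv_cancel[OF a' Xa'] Rcar_fpol[OF a b] by blast
qed

context
  fixes t :: nat
  assumes I_t_subset: "I_t n r t \<subseteq> P"
begin

lemma fpol_in_prime_replace:
  assumes u: "u \<in> Nset n r" and v: "v \<in> Nset n r" and c: "c \<in> Nset n r" and i: "i \<in> {1..t}"
    and ci: "c i = v i" and l: "\<And>k. k \<noteq> l \<Longrightarrow> c k = v k"
    and f_uc: "fpol i u c \<in> P" and Xc: "Xv c \<notin> P"
  shows "fpol i u v \<in> P"
proof -
  let ?a = "u(i := v i)" and ?b = "v(i := u i)" and ?c = "c(i := u i)"
  have "fpol i c ?b \<in> I_t n r t"
    by (rule fpol_in_I_t[where l = l]) (use c v u i l in \<open>auto intro: Nset_upd\<close>)
  then have "fpol i c ?b \<in> P" using I_t_subset by blast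
  then have "Xv v * fpol i u c - Xv ?a * fpol i c ?b \<in> P"
    using f_uc by (intro ideal_diff[OF is_subring_Rcar is_ideal_prime] ideal_mult[OF is_ideal_prime]
        Rcar_Xv Nset_upd u v c)
  also have "Xv v * fpol i u c - Xv ?a * fpol i c ?b = Xv c * fpol i u v"
  proof -
    have "v(i := u i, i := c i) = v" using ci by simp
    then show ?thesis using ci by (simp add: fpol_upd algebra_simps)
  qed
  finally show ?thesis using Xv_cancel[OF c Xc] Rcar_fpol[OF u v] by blast
qed

lemma fpol_in_prime_step:
  assumes a: "a \<in> Nset n r" and a': "a' \<in> Nset n r" and c: "c \<in> Nset n r" and b: "b \<in> Nset n r"
    and i: "i \<in> {1..t}" and "dst n a a' \<le> 1" "dst n c b \<le> 1"
    and f_ac: "fpol i a c \<in> P" and f_a'c: "fpol i a' c \<in> P" and f_a'b: "fpol i a' b \<in> P"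
    and Xa': "Xv a' \<notin> P" and Xc: "Xv c \<notin> P"
  shows "fpol i a b \<in> P"
proof -
  obtain l where l: "\<And>k. k \<noteq> l \<Longrightarrow> a k = a' k" using dst_le_one_obtain[OF a a'] assms(6) by blast
  obtain l' where l': "\<And>k. k \<noteq> l' \<Longrightarrow> c k = b k" using dst_le_one_obtain[OF c b] assms(7) by blast
  consider "c i = b i" | "a' i = a i" | "c i \<noteq> b i" "a' i \<noteq> a i" by blast
  then show ?thesis
  proof cases
    case 1
    then show ?thesis using fpol_in_prime_replace[OF a b c i _ l' f_ac Xc] by blast
  next
    case 2
    have "fpol i b a \<in> P"
      using fpol_in_prime_replace[OF b a a' i 2, of l] l f_a'b Xa' by (metis fpol_sym)
    then show ?thesis by (simp add: fpol_sym)
  next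
    case 3
    then have "l = i" "l' = i" using l l' by metis+
    then have "a' = a(i := a' i)" "b = c(i := b i)" using l l' by (auto simp: fun_eq_iff)
    then show ?thesis
      using fpol_in_prime_exchange[OF a c, of i "a' i" "b i"] a' b f_ac f_a'c f_a'b Xc Xa' by metis
  qed
qed

lemma fpol_in_prime_relpowp:
  "(adjacent_in n (nonvanishing_points n r P) ^^ k) a b \<Longrightarrow> i \<in> {1..t} \<Longrightarrow> fpol i a b \<in> P"
proof (induction k arbitrary: a b rule: less_induct)
  case (less k)
  let ?E = "adjacent_in n (nonvanishing_points n r P)"
  have E: "x \<in> Nset n r \<and> y \<in> Nset n r \<and> Xv x \<notin> P \<and> Xv y \<notin> P \<and> dst n x y \<le> 1" if "?E x y" for x y
    using that by (auto simp: adjacent_in_def nonvanishing_points_def)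
  consider "k = 0" | "k = Suc 0" | m where "k = Suc (Suc m)" by (metis not0_implies_Suc)
  then show ?case
  proof cases
    case 1
    then have "a = b" using less.prems(1) by (auto elim: relpowp_0_E)
    then show ?thesis using ideal_zero[OF is_ideal_prime] by (simp add: fpol_self)
  next
    case 2
    then have "?E a b" using less.prems(1) by (simp only: relpowp_Suc_0)
    then show ?thesis using E fpol_eq_zero_if_adjacent ideal_zero[OF is_ideal_prime] by metis
  next
    case 3
    \<comment> \<open>split the path as \<open>a \<rightarrow> a' \<dots> c \<rightarrow> b\<close>; the paths \<open>a \<dots> c\<close>, \<open>a' \<dots> c\<close>, \<open>a' \<dots> b\<close> are shorter\<close>
    obtain a' where "?E a a'" and a'b: "(?E ^^ Suc m) a' b"
      using less.prems(1) unfolding 3 by (rule relpowp_Suc_E2)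
    moreover obtain c where a'c: "(?E ^^ m) a' c" and "?E c b"
      using a'b by (rule relpowp_Suc_E)
    moreover have "(?E ^^ Suc m) a c" by (rule relpowp_Suc_I2[OF \<open>?E a a'\<close> a'c])
    ultimately show ?thesis
      using fpol_in_prime_step[OF _ _ _ _ less.prems(2)] less.IH[OF _ _ less.prems(2)] E 3
      by (metis lessI less_SucI)
  qed
qed

lemma fpol_in_prime_if_connected:
  assumes "connected_in n (nonvanishing_points n r P) a b" "i \<in> {1..t}"
  shows "fpol i a b \<in> P"
proof -
  obtain k where "(adjacent_in n (nonvanishing_points n r P) ^^ k) a b"
    using assms(1) unfolding connected_in_iff by (auto dest: rtranclp_imp_relpowp)
  then show ?thesis using fpol_in_prime_relpowp assms(2) by blast
qed

lemma switchable_nonvanishing_points: "switchable n r t (nonvanishing_points n r P)"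
  unfolding switchable_def
proof (intro conjI ballI impI)
  show "nonvanishing_points n r P \<subseteq> Nset n r" by (auto simp: nonvanishing_points_def)
next
  fix a b i assume "a \<in> nonvanishing_points n r P" "b \<in> nonvanishing_points n r P"
    and d: "dst n a b = 2" and i: "i \<in> {1..t}"
  then have a: "a \<in> Nset n r" and b: "b \<in> Nset n r" and "Xv a \<notin> P" "Xv b \<notin> P"
    by (auto simp: nonvanishing_points_def)
  then have ab: "Xv a * Xv b \<notin> P" using prime_idealD[OF prime Rcar_Xv[OF a] Rcar_Xv[OF b]] by blast
  have "fpol i a b \<in> I_t n r t"
    unfolding I_t_def by (intro gen_ideal_gen subring_one[OF is_subring_Rcar]) (use a b d i in blast)
  then have "fpol i a b \<in> P" using I_t_subset by blast
  \<comment> \<open>\<open>x\<^sub>a x\<^sub>b \<equiv> x\<^bsub>s(i,a,b)\<^esub> x\<^bsub>s(i,b,a)\<^esub>\<close> modulo \<open>P\<close>\<close>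
  show "switch {i} a b \<in> nonvanishing_points n r P"
  proof (rule ccontr)
    assume "switch {i} a b \<notin> nonvanishing_points n r P"
    then have "Xv (switch {i} b a) * Xv (switch {i} a b) \<in> P"
      using Nset_switch[OF a b] by (auto simp: nonvanishing_points_def
          intro!: ideal_mult[OF is_ideal_prime] Rcar_Xv Nset_switch b a)
    with \<open>fpol i a b \<in> P\<close> have "fpol i a b + Xv (switch {i} b a) * Xv (switch {i} a b) \<in> P"
      by (rule ideal_add[OF is_ideal_prime])
    then show False using ab by (simp add: fpol_def mult.commute)
  qed
qed

lemma P_S_nonvanishing_points_subset: "P_S n r t (nonvanishing_points n r P) \<subseteq> P"
  unfolding P_S_def
  by (rule gen_ideal_least[OF is_ideal_prime])
    (auto simp: nonvanishing_points_def intro: fpol_in_prime_if_connected)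

end

end

section \<open>The toric parametrization\<close>

type_synonym param_var = "nat list \<times> nat list \<times> nat \<times> nat"

locale toric_parametrization =
  fixes n t :: nat and r :: "nat \<Rightarrow> nat" and S :: "(nat \<Rightarrow> nat) set"
  assumes switchable: "switchable n r t S"
begin

lemma S_subset_Nset: "S \<subseteq> Nset n r"
  using switchable by (simp add: switchable_def)

lemma switch_mem:
  "a \<in> S \<Longrightarrow> b \<in> S \<Longrightarrow> dst n a b = 2 \<Longrightarrow> i \<in> {1..t} \<Longrightarrow> a(i := b i) \<in> S"
  using switchable unfolding switchable_def switch_singleton by blast

text \<open>Connected points have the same predicate \<open>connected_in n S a\<close> and hence the same
  \<open>SOME\<close>-representative. Its coordinates are listed, rather than the representative itself being
  used, because the integral-domain instance of \<open>poly_mapping\<close> needs linearly ordered variables.\<close>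

definition component_code :: "(nat \<Rightarrow> nat) \<Rightarrow> nat list" where
  "component_code a = map (SOME u. connected_in n S a u) [0..<Suc n]"

lemma component_code_eq: "connected_in n S a b \<Longrightarrow> component_code a = component_code b"
proof -
  assume "connected_in n S a b"
  then have "connected_in n S a = connected_in n S b"
    using connected_in_sym connected_in_trans by blast
  then show ?thesis by (simp add: component_code_def)
qed

lemma connected_if_component_code_eq:
  assumes a: "a \<in> S" and b: "b \<in> S" and eq: "component_code a = component_code b"
  shows "connected_in n S a b"
proof -
  define u where "u x = (SOME u. connected_in n S x u)" for x
  have u: "connected_in n S x (u x)" if "x \<in> S" for x
    unfolding u_def by (rule someI[of _ x]) (rule connected_in_refl[OF that])
  then have "u x \<in> Nset n r" if "x \<in> S" for x
    using that S_subset_Nset by (auto simp: connected_in_def)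
  then have "u a = u b"
    using Nset_encoding_inj eq a b by (metis component_code_def u_def)
  then show ?thesis using u[OF a] u[OF b] connected_in_sym connected_in_trans by metis
qed

definition tail_code :: "(nat \<Rightarrow> nat) \<Rightarrow> nat list" where
  "tail_code a = map a [Suc t..<Suc n]"

lemma Nset_eq_if_tail_code_eq:
  assumes "a \<in> Nset n r" "b \<in> Nset n r" "tail_code a = tail_code b" "\<And>j. j \<in> {1..t} \<Longrightarrow> a j = b j"
  shows "a = b"
proof (rule Nset_eqI[OF assms(1,2)])
  fix k assume "k \<in> {1..n}"
  then show "a k = b k" using assms(3,4) by (cases "k \<le> t") (auto simp: tail_code_def map_eq_conv)
qed

lemma tail_code_upd: "i \<in> {1..t} \<Longrightarrow> tail_code (a(i := x)) = tail_code a"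
  by (auto simp: tail_code_def)

text \<open>The variable \<open>w(C, l)\<close> of the parametrization is encoded as \<open>(C, l, 0, 0)\<close> and \<open>y(C, j, x)\<close>
  as \<open>(C, [], j, x)\<close> with \<open>j \<ge> 1\<close>; \<open>var_exponent a v\<close> is the exponent of \<open>v\<close> in the image of \<open>x\<^sub>a\<close>.\<close>

fun var_exponent :: "(nat \<Rightarrow> nat) \<Rightarrow> param_var \<Rightarrow> nat" where
  "var_exponent a (C, l, j, x) =
     (if C = component_code a \<and> l = tail_code a \<and> j = 0 \<and> x = 0 then 1 else 0)
   + (if C = component_code a \<and> l = [] \<and> j \<in> {1..t} \<and> x = a j then 1 else 0)"

declare var_exponent.simps [simp del]

lemma var_exponent_w: "var_exponent a (component_code a, tail_code a, 0, 0) = 1"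
  by (simp add: var_exponent.simps)

lemma var_exponent_y: "j \<in> {1..t} \<Longrightarrow> var_exponent a (component_code a, [], j, a j) \<noteq> 0"
  by (simp add: var_exponent.simps)

lemma var_exponent_w_nonzero:
  "var_exponent c (C, l, 0, 0) \<noteq> 0 \<Longrightarrow> component_code c = C \<and> tail_code c = l"
  by (simp add: var_exponent.simps split: if_splits)

lemma var_exponent_y_nonzero:
  "j \<in> {1..t} \<Longrightarrow> var_exponent c (C, [], j, x) \<noteq> 0 \<Longrightarrow> component_code c = C \<and> c j = x"
  by (auto simp: var_exponent.simps split: if_splits)

lemma var_exponent_support:
  "var_exponent a v \<noteq> 0 \<Longrightarrow>
     v \<in> insert (component_code a, tail_code a, 0, 0) ((\<lambda>j. (component_code a, [], j, a j)) ` {1..t})"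
  by (cases v) (auto simp: var_exponent.simps split: if_splits)

lemma var_exponent_swap:
  assumes "i \<in> {1..t}" "component_code a = C" "component_code b = C"
    "component_code (a(i := b i)) = C" "component_code (b(i := a i)) = C"
  shows "var_exponent a v + var_exponent b v = var_exponent (a(i := b i)) v + var_exponent (b(i := a i)) v"
  using assms tail_code_upd[OF assms(1)] by (cases v) (auto simp: var_exponent.simps)

definition mon_exponent :: "((nat \<Rightarrow> nat) \<Rightarrow>\<^sub>0 nat) \<Rightarrow> param_var \<Rightarrow> nat" where
  "mon_exponent m v = (\<Sum>a\<in>Poly_Mapping.keys m. Poly_Mapping.lookup m a * var_exponent a v)"

lemma finite_mon_exponent_support: "finite {v. mon_exponent m v \<noteq> 0}"
proof -
  let ?V = "\<lambda>a. insert (component_code a, tail_code a, 0, 0) ((\<lambda>j. (component_code a, [], j, a j)) ` {1..t})"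
  have "{v. mon_exponent m v \<noteq> 0} \<subseteq> (\<Union>a\<in>Poly_Mapping.keys m. ?V a)"
  proof
    fix v assume "v \<in> {v. mon_exponent m v \<noteq> 0}"
    then have "(\<Sum>a\<in>Poly_Mapping.keys m. Poly_Mapping.lookup m a * var_exponent a v) \<noteq> 0"
      by (simp add: mon_exponent_def)
    then obtain a where "a \<in> Poly_Mapping.keys m" "Poly_Mapping.lookup m a * var_exponent a v \<noteq> 0"
      by (meson sum.neutral)
    then show "v \<in> (\<Union>a\<in>Poly_Mapping.keys m. ?V a)"
      using var_exponent_support[of a v] by auto
  qed
  moreover have "finite (\<Union>a\<in>Poly_Mapping.keys m. ?V a)" by simp
  ultimately show ?thesis by (rule finite_subset)
qed

lemma mon_exponent_superset:
  "finite U \<Longrightarrow> Poly_Mapping.keys m \<subseteq> U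
    \<Longrightarrow> mon_exponent m v = (\<Sum>a\<in>U. Poly_Mapping.lookup m a * var_exponent a v)"
  unfolding mon_exponent_def by (rule sum_keys_superset[where f = "\<lambda>a x. x * var_exponent a v"]) auto

lemma mon_exponent_add: "mon_exponent (m + m') v = mon_exponent m v + mon_exponent m' v"
proof -
  let ?U = "Poly_Mapping.keys m \<union> Poly_Mapping.keys m'"
  show ?thesis
    using mon_exponent_superset[of ?U "m + m'" v] mon_exponent_superset[of ?U m v]
      mon_exponent_superset[of ?U m' v]
    by (simp add: keys_add_nat lookup_add distrib_right sum.distrib)
qed

lemma mon_exponent_single: "mon_exponent (Poly_Mapping.single a 1) v = var_exponent a v"
  by (simp add: mon_exponent_def)

lemma var_exponent_le_mon_exponent: "a \<in> Poly_Mapping.keys m \<Longrightarrow> var_exponent a v \<le> mon_exponent m v"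
proof -
  assume a: "a \<in> Poly_Mapping.keys m"
  then have "var_exponent a v \<le> Poly_Mapping.lookup m a * var_exponent a v" by (simp add: in_keys_iff)
  also have "\<dots> \<le> mon_exponent m v" unfolding mon_exponent_def by (rule member_le_sum[OF a]) auto
  finally show ?thesis .
qed

lemma mon_exponent_nonzero: "mon_exponent m v \<noteq> 0 \<Longrightarrow> \<exists>c\<in>Poly_Mapping.keys m. var_exponent c v \<noteq> 0"
  unfolding mon_exponent_def by (metis (no_types, lifting) mult_zero_right sum.neutral)

definition mon_image :: "((nat \<Rightarrow> nat) \<Rightarrow>\<^sub>0 nat) \<Rightarrow> (param_var \<Rightarrow>\<^sub>0 nat)" where
  "mon_image m = Abs_poly_mapping (mon_exponent m)"

lemma lookup_mon_image: "Poly_Mapping.lookup (mon_image m) v = mon_exponent m v"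
  unfolding mon_image_def using finite_mon_exponent_support by simp

lemma mon_image_add: "mon_image (m + m') = mon_image m + mon_image m'"
  by (rule poly_mapping_eqI) (simp add: lookup_mon_image lookup_add mon_exponent_add)

lemma mon_image_zero: "mon_image 0 = 0"
  by (rule poly_mapping_eqI) (simp add: lookup_mon_image mon_exponent_def)

lemma mon_image_swap:
  assumes "i \<in> {1..t}" "component_code a = C" "component_code b = C"
    "component_code (a(i := b i)) = C" "component_code (b(i := a i)) = C"
  shows "mon_image (Poly_Mapping.single a 1 + Poly_Mapping.single b 1)
       = mon_image (Poly_Mapping.single (a(i := b i)) 1 + Poly_Mapping.single (b(i := a i)) 1)"
  by (rule poly_mapping_eqI)
    (simp only: lookup_mon_image mon_exponent_add mon_exponent_single var_exponent_swap[OF assms])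

definition term_image :: "((nat \<Rightarrow> nat) \<Rightarrow>\<^sub>0 nat) \<Rightarrow> 'k::field \<Rightarrow> (param_var \<Rightarrow>\<^sub>0 nat) \<Rightarrow>\<^sub>0 'k" where
  "term_image m c = (if Poly_Mapping.keys m \<subseteq> S then Poly_Mapping.single (mon_image m) c else 0)"

definition toric_map :: "'k::field mpoly \<Rightarrow> (param_var \<Rightarrow>\<^sub>0 nat) \<Rightarrow>\<^sub>0 'k" where
  "toric_map p = (\<Sum>m\<in>Poly_Mapping.keys p. term_image m (Poly_Mapping.lookup p m))"

lemma term_image_add: "term_image m (c + d) = term_image m c + term_image m d"
  by (simp add: term_image_def single_add)

lemma toric_map_superset:
  "finite U \<Longrightarrow> Poly_Mapping.keys p \<subseteq> U \<Longrightarrow> toric_map p = (\<Sum>m\<in>U. term_image m (Poly_Mapping.lookup p m))"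
  unfolding toric_map_def by (rule sum_keys_superset) (auto simp: term_image_def)

lemma toric_map_add: "toric_map (p + q) = toric_map p + toric_map q"
proof -
  let ?U = "Poly_Mapping.keys p \<union> Poly_Mapping.keys q"
  have "toric_map (p + q) = (\<Sum>m\<in>?U. term_image m (Poly_Mapping.lookup (p + q) m))"
    by (rule toric_map_superset) (use keys_add[of p q] in auto)
  also have "\<dots> = toric_map p + toric_map q"
    using toric_map_superset[of ?U p] toric_map_superset[of ?U q]
    by (simp add: lookup_add term_image_add sum.distrib)
  finally show ?thesis .
qed

lemma toric_map_diff: "toric_map (p - q) = toric_map p - toric_map q"
  using toric_map_add[of "p - q" q] by (simp add: eq_diff_eq)

lemma toric_map_single: "toric_map (Poly_Mapping.single m c) = term_image m c"
  by (cases "c = 0") (simp_all add: toric_map_def term_image_def)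

lemma toric_map_zero: "toric_map 0 = 0"
  by (simp add: toric_map_def)

lemma toric_map_sum: "toric_map (sum f F) = (\<Sum>x\<in>F. toric_map (f x))"
  by (induction F rule: infinite_finite_induct) (simp_all add: toric_map_zero toric_map_add)

lemma term_image_mult: "term_image (m + m') (c * d) = term_image m c * term_image m' d"
  by (simp add: term_image_def keys_add_nat mon_image_add mult_single)

lemma toric_map_mult: "toric_map (p * q) = toric_map p * toric_map q"
proof -
  let ?K = "Poly_Mapping.keys p" and ?L = "Poly_Mapping.keys q"
  have "p * q = (\<Sum>m\<in>?K. Poly_Mapping.single m (Poly_Mapping.lookup p m)) *
      (\<Sum>m'\<in>?L. Poly_Mapping.single m' (Poly_Mapping.lookup q m'))"
    using poly_mapping_sum_single_lookup[of p] poly_mapping_sum_single_lookup[of q] by simp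
  also have "\<dots> = (\<Sum>m\<in>?K. \<Sum>m'\<in>?L.
      Poly_Mapping.single (m + m') (Poly_Mapping.lookup p m * Poly_Mapping.lookup q m'))"
    by (simp add: sum_product mult_single)
  finally have "toric_map (p * q) = (\<Sum>m\<in>?K. \<Sum>m'\<in>?L.
      term_image m (Poly_Mapping.lookup p m) * term_image m' (Poly_Mapping.lookup q m'))"
    by (simp add: toric_map_sum toric_map_single term_image_mult)
  also have "\<dots> = toric_map p * toric_map q"
    by (simp add: toric_map_def sum_product)
  finally show ?thesis .
qed

lemma toric_map_one: "toric_map 1 = 1"
proof -
  have "toric_map (1 :: 'k::field mpoly) = toric_map (Poly_Mapping.single 0 1)" by simp
  also have "\<dots> = 1" by (simp only: toric_map_single) (simp add: term_image_def mon_image_zero)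
  finally show ?thesis .
qed

lemma toric_map_Xv:
  "toric_map (Xv a :: 'k::field mpoly) = (if a \<in> S then Poly_Mapping.single (mon_image (Poly_Mapping.single a 1)) 1 else 0)"
  by (simp add: Xv_def toric_map_single term_image_def)

lemma toric_map_Xv_mult: "toric_map (Xv a * Xv b :: 'k::field mpoly) =
   (if a \<in> S \<and> b \<in> S
    then Poly_Mapping.single (mon_image (Poly_Mapping.single a 1 + Poly_Mapping.single b 1)) 1 else 0)"
  by (simp add: toric_map_mult toric_map_Xv mult_single mon_image_add)

lemma lookup_toric_map:
  "Poly_Mapping.lookup (toric_map p) e =
     (\<Sum>m\<in>{m \<in> Poly_Mapping.keys p. Poly_Mapping.keys m \<subseteq> S \<and> mon_image m = e}. Poly_Mapping.lookup p m)"
proof -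
  have "Poly_Mapping.lookup (toric_map p) e = (\<Sum>m\<in>Poly_Mapping.keys p.
      if Poly_Mapping.keys m \<subseteq> S \<and> mon_image m = e then Poly_Mapping.lookup p m else 0)"
    unfolding toric_map_def lookup_sum by (rule sum.cong) (auto simp: term_image_def lookup_single when_def)
  then show ?thesis by (simp add: sum.inter_filter)
qed

definition toric_ideal :: "'k::field mpoly set" where
  "toric_ideal = {p \<in> Rcar (Nset n r). toric_map p = 0}"

lemma prime_toric_ideal: "prime_ideal (Rcar (Nset n r)) toric_ideal"
  unfolding toric_ideal_def
  by (rule prime_ideal_kernel[OF is_subring_Rcar toric_map_add toric_map_mult]) (simp add: toric_map_one)

lemma Xv_in_toric_ideal_iff: "a \<in> Nset n r \<Longrightarrow> Xv a \<in> toric_ideal \<longleftrightarrow> a \<notin> S"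
  by (simp add: toric_ideal_def toric_map_Xv Rcar_Xv)

lemma switched_pair_mem_iff:
  assumes d: "dst n a b = 2" and i: "i \<in> {1..t}"
  shows "a(i := b i) \<in> S \<and> b(i := a i) \<in> S \<longleftrightarrow> a \<in> S \<and> b \<in> S"
proof
  show "a \<in> S \<and> b \<in> S \<Longrightarrow> a(i := b i) \<in> S \<and> b(i := a i) \<in> S"
    using switch_mem d i dst_sym by metis
  assume switched: "a(i := b i) \<in> S \<and> b(i := a i) \<in> S"
  \<comment> \<open>switching back recovers \<open>a\<close> and \<open>b\<close>\<close>
  have "dst n (a(i := b i)) (b(i := a i)) = 2" using d dst_swap by metis
  then have "(a(i := b i))(i := (b(i := a i)) i) \<in> S" "(b(i := a i))(i := (a(i := b i)) i) \<in> S"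
    using switch_mem switched i dst_sym by metis+
  then show "a \<in> S \<and> b \<in> S" by simp
qed

lemma mon_image_switched_pair:
  assumes a: "a \<in> S" and b: "b \<in> S" and d: "dst n a b = 2" and i: "i \<in> {1..t}"
  shows "mon_image (Poly_Mapping.single a 1 + Poly_Mapping.single b 1)
       = mon_image (Poly_Mapping.single (a(i := b i)) 1 + Poly_Mapping.single (b(i := a i)) 1)"
proof (cases "a i = b i")
  case False
  have "a(i := b i) \<in> S" "b(i := a i) \<in> S" using switched_pair_mem_iff[OF d i] a b by blast+
  moreover have "dst n (a(i := b i)) b \<le> 1"
    using dst_upd_other[OF d False] a b S_subset_Nset by blast
  ultimately have "component_code (a(i := b i)) = component_code a"
      "component_code (b(i := a i)) = component_code b" "component_code (a(i := b i)) = component_code b"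
    using component_code_eq connected_in_adjacent[OF _ _ dst_upd_le_one] connected_in_adjacent a b
    by metis+
  then show ?thesis using mon_image_swap[OF i] by metis
next
  case True
  then have "a(i := b i) = a" "b(i := a i) = b" by auto
  then show ?thesis by simp
qed

lemma fpol_in_toric_ideal:
  assumes a: "a \<in> Nset n r" and b: "b \<in> Nset n r" and d: "dst n a b = 2" and i: "i \<in> {1..t}"
  shows "fpol i a b \<in> (toric_ideal :: 'k::field mpoly set)"
proof -
  have "toric_map (Xv a * Xv b :: 'k mpoly) = toric_map (Xv (a(i := b i)) * Xv (b(i := a i)))"
    using switched_pair_mem_iff[OF d i] mon_image_switched_pair[OF _ _ d i]
    by (simp add: toric_map_Xv_mult)
  then show ?thesis
    using Rcar_fpol[OF a b] by (simp add: toric_ideal_def fpol_upd toric_map_diff)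
qed

lemma I_t_subset_toric_ideal: "I_t n r t \<subseteq> (toric_ideal :: 'k::field mpoly set)"
  unfolding I_t_def
  by (rule gen_ideal_least[OF prime_toric_ideal[unfolded prime_ideal_def, THEN conjunct1]])
    (auto intro: fpol_in_toric_ideal)

lemma P_S_subset_toric_ideal: "P_S n r t S \<subseteq> (toric_ideal :: 'k::field mpoly set)"
proof -
  have "nonvanishing_points n r (toric_ideal :: 'k mpoly set) = S"
    using S_subset_Nset Xv_in_toric_ideal_iff by (auto simp: nonvanishing_points_def)
  moreover have "P_S n r t (nonvanishing_points n r (toric_ideal :: 'k mpoly set)) \<subseteq> (toric_ideal :: 'k mpoly set)"
    by (rule P_S_nonvanishing_points_subset[OF prime_toric_ideal I_t_subset_toric_ideal])
  ultimately show ?thesis by simp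
qed

lemma is_ideal_P_S: "is_ideal (Rcar (Nset n r)) (P_S n r t S :: 'k::field mpoly set)"
  unfolding P_S_def
proof (rule gen_ideal_is_ideal[OF is_subring_Rcar])
  have "a \<in> Nset n r \<and> b \<in> Nset n r" if "connected_in n S a b" for a b
    using that S_subset_Nset by (auto simp: connected_in_def)
  then show "{Xv a |a. a \<in> Nset n r \<and> a \<notin> S} \<union> {fpol i a b |i a b. i \<in> {1..t} \<and> connected_in n S a b}
      \<subseteq> (Rcar (Nset n r) :: 'k mpoly set)"
    by (auto intro: Rcar_Xv Rcar_fpol)
qed

lemma fpol_in_P_S: "i \<in> {1..t} \<Longrightarrow> connected_in n S a b \<Longrightarrow> fpol i a b \<in> P_S n r t S"
  unfolding P_S_def by (rule gen_ideal_gen[OF subring_one[OF is_subring_Rcar]]) blast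

lemma Xv_in_P_S: "a \<in> Nset n r \<Longrightarrow> a \<notin> S \<Longrightarrow> Xv a \<in> P_S n r t S"
  unfolding P_S_def by (rule gen_ideal_gen[OF subring_one[OF is_subring_Rcar]]) blast

lemma monomial_in_P_S:
  assumes m: "Poly_Mapping.keys m \<subseteq> Nset n r" and a: "a \<in> Poly_Mapping.keys m" "a \<notin> S"
  shows "monomial m \<in> P_S n r t S"
proof -
  let ?rest = "m - Poly_Mapping.single a 1"
  have "monomial m = monomial (Poly_Mapping.single a 1 + ?rest)"
    by (rule arg_cong[where f = monomial, OF single_add_diff_single[OF a(1)]])
  also have "\<dots> = monomial ?rest * Xv a"
    unfolding monomial_add monomial_single by (rule mult.commute)
  also have "\<dots> \<in> P_S n r t S"
  proof (rule ideal_mult[OF is_ideal_P_S])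
    show "monomial ?rest \<in> Rcar (Nset n r)"
      by (rule Rcar_monomial) (use keys_diff_single_subset[of m a] m in blast)
    show "Xv a \<in> P_S n r t S" by (rule Xv_in_P_S) (use a m in auto)
  qed
  finally show ?thesis .
qed

lemma swap_step:
  assumes m: "Poly_Mapping.keys m \<subseteq> S" and b: "b \<in> Poly_Mapping.keys m"
    and c: "c \<in> Poly_Mapping.keys m" "b \<noteq> c" and conn: "connected_in n S b c" and j: "j \<in> {1..t}"
  obtains m' where "Poly_Mapping.keys m' \<subseteq> S" "mon_image m' = mon_image m"
    "monomial m - monomial m' \<in> (P_S n r t S :: 'k::field mpoly set)" "b(j := c j) \<in> Poly_Mapping.keys m'"
proof -
  let ?b' = "b(j := c j)" and ?c' = "c(j := b j)"
  have bS: "b \<in> S" and cS: "c \<in> S" using m b c by auto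
  have f: "fpol j b c \<in> (P_S n r t S :: 'k mpoly set)" by (rule fpol_in_P_S[OF j conn])
  then have "toric_map (fpol j b c :: 'k mpoly) = 0"
    using P_S_subset_toric_ideal by (auto simp: toric_ideal_def)
  then have eq: "Poly_Mapping.single (mon_image (Poly_Mapping.single b 1 + Poly_Mapping.single c 1)) (1::'k) =
    (if ?b' \<in> S \<and> ?c' \<in> S
     then Poly_Mapping.single (mon_image (Poly_Mapping.single ?b' 1 + Poly_Mapping.single ?c' 1)) 1 else 0)"
    by (simp add: fpol_upd toric_map_diff toric_map_Xv_mult bS cS)
  then have b'S: "?b' \<in> S" and c'S: "?c' \<in> S" by (metis single_one_neq_zero)+
  with eq have img: "mon_image (Poly_Mapping.single ?b' 1 + Poly_Mapping.single ?c' 1)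
      = mon_image (Poly_Mapping.single b 1 + Poly_Mapping.single c 1)" by (simp add: single_one_eq_iff)
  define rest where "rest = m - Poly_Mapping.single b 1 - Poly_Mapping.single c 1"
  have "c \<in> Poly_Mapping.keys (m - Poly_Mapping.single b 1)" by (rule in_keys_diff_single) (use c in auto)
  then have m_eq: "m = Poly_Mapping.single b 1 + Poly_Mapping.single c 1 + rest"
    using single_add_diff_single[OF b] single_add_diff_single unfolding rest_def by (metis add.assoc)
  define m' where "m' = Poly_Mapping.single ?b' 1 + Poly_Mapping.single ?c' 1 + rest"
  have rest: "Poly_Mapping.keys rest \<subseteq> S" using m by (subst (asm) m_eq) (simp add: keys_add_nat)
  have "monomial m - monomial m' = monomial rest * fpol j b c"
    unfolding m_eq m'_def monomial_add monomial_single fpol_upd by (simp add: algebra_simps)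
  also have "\<dots> \<in> (P_S n r t S :: 'k mpoly set)"
    by (rule ideal_mult[OF is_ideal_P_S _ f], rule Rcar_monomial) (use rest S_subset_Nset in blast)
  finally have "monomial m - monomial m' \<in> (P_S n r t S :: 'k mpoly set)" .
  moreover have "Poly_Mapping.keys m' \<subseteq> S" using rest b'S c'S by (auto simp: m'_def keys_add_nat)
  moreover have "mon_image m' = mon_image m" using img by (simp add: m'_def m_eq mon_image_add)
  moreover have "?b' \<in> Poly_Mapping.keys m'" by (simp add: m'_def keys_add_nat)
  ultimately show ?thesis using that by blast
qed

lemma move_to_point:
  assumes a: "a \<in> S"
  shows "card {j \<in> {1..t}. b j \<noteq> a j} = k \<Longrightarrow> Poly_Mapping.keys m \<subseteq> S \<Longrightarrow> b \<in> Poly_Mapping.keys m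
    \<Longrightarrow> component_code b = component_code a \<Longrightarrow> tail_code b = tail_code a
    \<Longrightarrow> (\<And>j. j \<in> {1..t} \<Longrightarrow> mon_exponent m (component_code a, [], j, a j) \<noteq> 0)
    \<Longrightarrow> \<exists>m'. Poly_Mapping.keys m' \<subseteq> S \<and> mon_image m' = mon_image m
        \<and> monomial m - monomial m' \<in> (P_S n r t S :: 'k::field mpoly set) \<and> a \<in> Poly_Mapping.keys m'"
proof (induction k arbitrary: m b)
  case 0
  have "b = a"
    by (rule Nset_eq_if_tail_code_eq) (use 0 a S_subset_Nset in auto)
  then show ?case using 0 ideal_zero[OF is_ideal_P_S] by (intro exI[of _ m]) auto
next
  case (Suc k)
  then have "{j \<in> {1..t}. b j \<noteq> a j} \<noteq> {}" by (metis card.empty Zero_not_Suc)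
  then obtain j where j: "j \<in> {1..t}" and bj: "b j \<noteq> a j" by blast
  obtain c where c: "c \<in> Poly_Mapping.keys m" "var_exponent c (component_code a, [], j, a j) \<noteq> 0"
    using mon_exponent_nonzero Suc.prems(6)[OF j] by blast
  then have cc: "component_code c = component_code a" and cj: "c j = a j"
    using var_exponent_y_nonzero[OF j] by blast+
  have "b \<noteq> c" using bj cj by blast
  moreover have "connected_in n S b c"
    by (rule connected_if_component_code_eq) (use Suc.prems(2-4) c(1) cc in auto)
  ultimately obtain m' where m': "Poly_Mapping.keys m' \<subseteq> S" "mon_image m' = mon_image m"
      "monomial m - monomial m' \<in> (P_S n r t S :: 'k mpoly set)" "b(j := c j) \<in> Poly_Mapping.keys m'"
    by (rule swap_step[OF Suc.prems(2,3) c(1) _ _ j])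
  let ?b' = "b(j := c j)"
  have "{j' \<in> {1..t}. ?b' j' \<noteq> a j'} = {j' \<in> {1..t}. b j' \<noteq> a j'} - {j}"
    using cj by auto
  then have card: "card {j' \<in> {1..t}. ?b' j' \<noteq> a j'} = k"
    using Suc.prems(1) j bj by (simp add: card_Diff_singleton)
  have "connected_in n S b ?b'"
    by (rule connected_in_adjacent[OF _ _ dst_upd_le_one]) (use m' Suc.prems(2,3) in auto)
  then have code: "component_code ?b' = component_code a"
    using component_code_eq Suc.prems(4) by metis
  have tail: "tail_code ?b' = tail_code a" using tail_code_upd[OF j] Suc.prems(5) by simp
  have "mon_exponent m' v = mon_exponent m v" for v
    using m'(2) lookup_mon_image[of m' v] lookup_mon_image[of m v] by simp
  then obtain m'' where m'': "Poly_Mapping.keys m'' \<subseteq> S" "mon_image m'' = mon_image m'"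
      "monomial m' - monomial m'' \<in> (P_S n r t S :: 'k mpoly set)" "a \<in> Poly_Mapping.keys m''"
    using Suc.IH[OF card m'(1,4) code tail] Suc.prems(6) by auto
  have "(monomial m - monomial m') + (monomial m' - monomial m'') \<in> (P_S n r t S :: 'k mpoly set)"
    by (rule ideal_add[OF is_ideal_P_S m'(3) m''(3)])
  then show ?case using m'' m'(2) by (intro exI[of _ m'']) simp
qed

lemma mon_image_eq_zero: "mon_image m = 0 \<Longrightarrow> m = 0"
proof (rule ccontr)
  assume "mon_image m = 0" "m \<noteq> 0"
  then obtain b where b: "b \<in> Poly_Mapping.keys m" using keys_eq_empty by blast
  have "mon_exponent m (component_code b, tail_code b, 0, 0) = 0"
    using \<open>mon_image m = 0\<close> lookup_mon_image by (metis lookup_zero)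
  \<comment> \<open>every variable contributes a \<open>w\<close>-variable\<close>
  then show False using var_exponent_le_mon_exponent[OF b] var_exponent_w[of b] by (metis not_one_le_zero)
qed

lemma move_to_key:
  assumes m: "Poly_Mapping.keys m \<subseteq> S" and image: "mon_image m = mon_image m'"
    and a: "a \<in> Poly_Mapping.keys m'" and aS: "a \<in> S"
  obtains m2 where "Poly_Mapping.keys m2 \<subseteq> S" "mon_image m2 = mon_image m'"
    "monomial m - monomial m2 \<in> (P_S n r t S :: 'k::field mpoly set)" "a \<in> Poly_Mapping.keys m2"
proof -
  have exp_a: "mon_exponent m v \<noteq> 0" if "var_exponent a v \<noteq> 0" for v
    using var_exponent_le_mon_exponent[OF a, of v] that image
      lookup_mon_image[of m v] lookup_mon_image[of m' v] by simp
  have "mon_exponent m (component_code a, tail_code a, 0, 0) \<noteq> 0"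
    by (rule exp_a) (simp add: var_exponent_w)
  then obtain b where b: "b \<in> Poly_Mapping.keys m" "var_exponent b (component_code a, tail_code a, 0, 0) \<noteq> 0"
    using mon_exponent_nonzero by blast
  then have "component_code b = component_code a" "tail_code b = tail_code a"
    using var_exponent_w_nonzero by blast+
  then show ?thesis
    using move_to_point[OF aS refl m b(1)] exp_a var_exponent_y image that by metis
qed

lemma binomial_in_P_S:
  "total_degree m' = d \<Longrightarrow> Poly_Mapping.keys m \<subseteq> S \<Longrightarrow> Poly_Mapping.keys m' \<subseteq> S
    \<Longrightarrow> mon_image m = mon_image m' \<Longrightarrow> monomial m - monomial m' \<in> (P_S n r t S :: 'k::field mpoly set)"
proof (induction d arbitrary: m m' rule: less_induct)
  case (less d)
  show ?case
  proof (cases "m' = 0")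
    case True
    then have "m = 0" using less.prems(4) mon_image_zero mon_image_eq_zero by metis
    then show ?thesis using True ideal_zero[OF is_ideal_P_S] by simp
  next
    case False
    then obtain a where a: "a \<in> Poly_Mapping.keys m'" using keys_eq_empty by blast
    have aS: "a \<in> S" using a less.prems(3) by blast
    obtain m2 where m2: "Poly_Mapping.keys m2 \<subseteq> S" "mon_image m2 = mon_image m'"
        "monomial m - monomial m2 \<in> (P_S n r t S :: 'k mpoly set)" "a \<in> Poly_Mapping.keys m2"
      by (rule move_to_key[OF less.prems(2,4) a aS])
    \<comment> \<open>cancel the common variable \<open>x\<^sub>a\<close> and recurse\<close>
    define m2r where "m2r = m2 - Poly_Mapping.single a 1"
    define m'r where "m'r = m' - Poly_Mapping.single a 1"
    have m2_eq: "m2 = Poly_Mapping.single a 1 + m2r"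
      unfolding m2r_def by (rule single_add_diff_single[OF m2(4)])
    have m'_eq: "m' = Poly_Mapping.single a 1 + m'r"
      unfolding m'r_def by (rule single_add_diff_single[OF a])
    have "mon_image (Poly_Mapping.single a 1) + mon_image m2r = mon_image (Poly_Mapping.single a 1) + mon_image m'r"
      using m2(2) by (subst (asm) m2_eq, subst (asm) m'_eq) (simp add: mon_image_add)
    then have "mon_image m2r = mon_image m'r" by simp
    moreover have "total_degree m' = 1 + total_degree m'r"
      by (subst m'_eq) (simp only: total_degree_add total_degree_single)
    then have "total_degree m'r < d" using less.prems(1) by simp
    moreover have "Poly_Mapping.keys m2r \<subseteq> S" "Poly_Mapping.keys m'r \<subseteq> S"
      unfolding m2r_def m'r_def
      using keys_diff_single_subset[of m2 a] keys_diff_single_subset[of m' a] m2(1) less.prems(3) by blast+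
    ultimately have "monomial m2r - monomial m'r \<in> (P_S n r t S :: 'k mpoly set)"
      using less.IH[OF _ refl] by blast
    then have shifted: "Xv a * (monomial m2r - monomial m'r) \<in> (P_S n r t S :: 'k mpoly set)"
      using aS S_subset_Nset by (intro ideal_mult[OF is_ideal_P_S] Rcar_Xv) blast
    have "monomial m2 = (Xv a * monomial m2r :: 'k mpoly)" "monomial m' = (Xv a * monomial m'r :: 'k mpoly)"
      by (subst m2_eq, simp only: monomial_add monomial_single)
        (subst m'_eq, simp only: monomial_add monomial_single)
    then have "(monomial m - monomial m' :: 'k mpoly)
        = (monomial m - monomial m2) + Xv a * (monomial m2r - monomial m'r)"
      by (simp add: algebra_simps)
    also have "\<dots> \<in> P_S n r t S" by (rule ideal_add[OF is_ideal_P_S m2(3) shifted])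
    finally show ?thesis .
  qed
qed

lemma toric_ideal_subset_P_S: "(toric_ideal :: 'k::field mpoly set) \<subseteq> P_S n r t S"
proof
  fix p :: "'k mpoly" assume "p \<in> toric_ideal"
  then have p: "p \<in> Rcar (Nset n r)" and image: "toric_map p = 0" by (auto simp: toric_ideal_def)
  define c where "c m = (Poly_Mapping.single 0 (Poly_Mapping.lookup p m) :: 'k mpoly)" for m
  define K1 where "K1 = {m \<in> Poly_Mapping.keys p. Poly_Mapping.keys m \<subseteq> S}"
  define K2 where "K2 = {m \<in> Poly_Mapping.keys p. \<not> Poly_Mapping.keys m \<subseteq> S}"
  have "p = (\<Sum>m\<in>Poly_Mapping.keys p. Poly_Mapping.single m (Poly_Mapping.lookup p m))"
    by (rule poly_mapping_sum_single_lookup)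
  also have "\<dots> = (\<Sum>m\<in>K1 \<union> K2. c m * monomial m)"
    by (rule sum.cong) (auto simp: K1_def K2_def c_def monomial_def mult_single)
  also have "\<dots> = (\<Sum>m\<in>K1. c m * monomial m) + (\<Sum>m\<in>K2. c m * monomial m)"
    by (rule sum.union_disjoint) (auto simp: K1_def K2_def)
  also have "\<dots> \<in> P_S n r t S"
  proof (rule ideal_add[OF is_ideal_P_S])
    have c: "c m \<in> Rcar (Nset n r)" for m by (simp add: c_def Rcar_single)
    show "(\<Sum>m\<in>K1. c m * monomial m) \<in> P_S n r t S"
    proof (rule fibrewise_sum_in_ideal[OF is_ideal_P_S _ c])
      show "finite K1" by (simp add: K1_def)
      show "(\<Sum>m\<in>{m \<in> K1. mon_image m = e}. c m) = 0" for e
      proof -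
        have "{m \<in> K1. mon_image m = e} = {m \<in> Poly_Mapping.keys p. Poly_Mapping.keys m \<subseteq> S \<and> mon_image m = e}"
          by (auto simp: K1_def)
        then show ?thesis
          using image lookup_toric_map[of p e] by (simp add: c_def flip: single_sum)
      qed
      show "monomial m - monomial m' \<in> P_S n r t S"
        if "m \<in> K1" "m' \<in> K1" "mon_image m = mon_image m'" for m m'
        using that by (intro binomial_in_P_S[OF refl]) (auto simp: K1_def)
    qed
    have "monomial m \<in> P_S n r t S" if "m \<in> K2" for m
      using that p by (auto simp: K2_def Rcar_def intro: monomial_in_P_S)
    then show "(\<Sum>m\<in>K2. c m * monomial m) \<in> P_S n r t S"
      by (intro ideal_sum[OF is_ideal_P_S] ideal_mult[OF is_ideal_P_S c])
  qed
  finally show "p \<in> P_S n r t S" .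
qed

lemma P_S_eq_toric_ideal: "P_S n r t S = (toric_ideal :: 'k::field mpoly set)"
  using P_S_subset_toric_ideal toric_ideal_subset_P_S by blast

end

section \<open>Minimal primes of \<open>I_t\<close>\<close>

context
  fixes n t :: nat and r :: "nat \<Rightarrow> nat" and S :: "(nat \<Rightarrow> nat) set"
  assumes switchable: "switchable n r t S"
begin

interpretation toric_parametrization n t r S
  by unfold_locales (rule switchable)

lemma prime_P_S: "prime_ideal (Rcar (Nset n r)) (P_S n r t S :: 'k::field mpoly set)"
  unfolding P_S_eq_toric_ideal by (rule prime_toric_ideal)

lemma I_t_subset_P_S: "I_t n r t \<subseteq> (P_S n r t S :: 'k::field mpoly set)"
  unfolding P_S_eq_toric_ideal by (rule I_t_subset_toric_ideal)

lemma Xv_in_P_S_iff: "a \<in> Nset n r \<Longrightarrow> Xv a \<in> (P_S n r t S :: 'k::field mpoly set) \<longleftrightarrow> a \<notin> S"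
  unfolding P_S_eq_toric_ideal by (rule Xv_in_toric_ideal_iff)

end

lemma P_S_subset_imp_superset:
  assumes "switchable n r t S" "switchable n r t T"
    and "(P_S n r t S :: 'k::field mpoly set) \<subseteq> P_S n r t T"
  shows "T \<subseteq> S"
proof
  fix a assume "a \<in> T"
  moreover have "a \<in> Nset n r" using assms(2) \<open>a \<in> T\<close> by (auto simp: switchable_def)
  ultimately show "a \<in> S"
    using assms(3) Xv_in_P_S_iff[OF assms(1), where 'k = 'k] Xv_in_P_S_iff[OF assms(2), where 'k = 'k] by blast
qed

lemma minimal_prime_overD:
  assumes "minimal_prime_over A J P"
  shows "prime_ideal A P" "J \<subseteq> P" "\<And>Q. prime_ideal A Q \<Longrightarrow> J \<subseteq> Q \<Longrightarrow> Q \<subseteq> P \<Longrightarrow> Q = P"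
  using assms by (auto simp: minimal_prime_over_def)

lemma minimal_prime_eq_P_S:
  assumes minimal: "minimal_prime_over (Rcar (Nset n r)) (I_t n r t) P"
  shows "P_S n r t (nonvanishing_points n r P) = (P :: 'k::field mpoly set)"
proof -
  note prime = minimal_prime_overD(1)[OF minimal] and I_t = minimal_prime_overD(2)[OF minimal]
  have sw: "switchable n r t (nonvanishing_points n r P)"
    by (rule switchable_nonvanishing_points[OF prime I_t])
  show ?thesis
    by (rule minimal_prime_overD(3)[OF minimal prime_P_S[OF sw] I_t_subset_P_S[OF sw]
          P_S_nonvanishing_points_subset[OF prime I_t]])
qed

lemma maximal_switchable_nonvanishing_points:
  assumes minimal: "minimal_prime_over (Rcar (Nset n r)) (I_t n r t) P"
  shows "maximal_switchable TYPE('k::field) n r t (nonvanishing_points n r (P :: 'k mpoly set))"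
  unfolding maximal_switchable_def
proof (intro conjI allI impI)
  let ?S = "nonvanishing_points n r P"
  show sw: "switchable n r t ?S"
    by (rule switchable_nonvanishing_points[OF minimal_prime_overD(1,2)[OF minimal]])
  fix T assume "switchable n r t T \<and> ?S \<subset> T"
  then have swT: "switchable n r t T" and ST: "?S \<subset> T" by auto
  show "\<not> (P_S n r t ?S :: 'k mpoly set) \<subseteq> P_S n r t T"
    using P_S_subset_imp_superset[OF sw swT] ST by blast
  show "\<not> (P_S n r t T :: 'k mpoly set) \<subseteq> P_S n r t ?S"
  proof
    assume "(P_S n r t T :: 'k mpoly set) \<subseteq> P_S n r t ?S"
    then have "P_S n r t T \<subseteq> P" using minimal_prime_eq_P_S[OF minimal] by simp
    then have "P_S n r t T = P"
      by (rule minimal_prime_overD(3)[OF minimal prime_P_S[OF swT] I_t_subset_P_S[OF swT]])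
    then have "(P_S n r t ?S :: 'k mpoly set) \<subseteq> P_S n r t T" using minimal_prime_eq_P_S[OF minimal] by simp
    then show False using P_S_subset_imp_superset[OF sw swT] ST by blast
  qed
qed

lemma minimal_prime_P_S:
  assumes maximal: "maximal_switchable TYPE('k::field) n r t S"
  shows "minimal_prime_over (Rcar (Nset n r)) (I_t n r t) (P_S n r t S :: 'k mpoly set)"
  unfolding minimal_prime_over_def
proof (intro conjI allI impI)
  have sw: "switchable n r t S" using maximal by (simp add: maximal_switchable_def)
  show "prime_ideal (Rcar (Nset n r)) (P_S n r t S :: 'k mpoly set)" by (rule prime_P_S[OF sw])
  show "I_t n r t \<subseteq> (P_S n r t S :: 'k mpoly set)" by (rule I_t_subset_P_S[OF sw])
  fix Q :: "'k mpoly set"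
  assume "prime_ideal (Rcar (Nset n r)) Q \<and> I_t n r t \<subseteq> Q \<and> Q \<subseteq> P_S n r t S"
  then have prime: "prime_ideal (Rcar (Nset n r)) Q" and I_t: "I_t n r t \<subseteq> Q" and QS: "Q \<subseteq> P_S n r t S"
    by auto
  let ?T = "nonvanishing_points n r Q"
  have swT: "switchable n r t ?T" by (rule switchable_nonvanishing_points[OF prime I_t])
  have TQ: "P_S n r t ?T \<subseteq> Q" by (rule P_S_nonvanishing_points_subset[OF prime I_t])
  have "S \<subseteq> ?T" using P_S_subset_imp_superset[OF swT sw] TQ QS by blast
  moreover have "\<not> S \<subset> ?T"
  proof
    assume "S \<subset> ?T"
    then have "\<not> (P_S n r t ?T :: 'k mpoly set) \<subseteq> P_S n r t S"
      using maximal swT by (simp add: maximal_switchable_def)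
    with TQ QS show False by blast
  qed
  ultimately show "Q = P_S n r t S" using TQ QS by blast
qed

theorem theorem4p13:
  fixes n t :: nat and r :: "nat \<Rightarrow> nat"
  assumes "\<forall>i\<in>{1..n}. r i > 0"
    and "t \<in> {1..n}"
  shows "{P :: 'k::field mpoly set. minimal_prime_over (Rcar (Nset n r)) (I_t n r t) P}
       = {P_S n r t S | S. maximal_switchable TYPE('k) n r t S}"
proof (intro set_eqI iffI)
  fix P :: "'k mpoly set"
  assume "P \<in> {P. minimal_prime_over (Rcar (Nset n r)) (I_t n r t) P}"
  then have minimal: "minimal_prime_over (Rcar (Nset n r)) (I_t n r t) P" by simp
  show "P \<in> {P_S n r t S | S. maximal_switchable TYPE('k) n r t S}"
    using minimal_prime_eq_P_S[OF minimal, symmetric] maximal_switchable_nonvanishing_points[OF minimal]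
    by blast
next
  fix P :: "'k mpoly set"
  assume "P \<in> {P_S n r t S | S. maximal_switchable TYPE('k) n r t S}"
  then show "P \<in> {P. minimal_prime_over (Rcar (Nset n r)) (I_t n r t) P}"
    using minimal_prime_P_S by blast
qed

end
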